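(* Consider any $\bar x\in\mathcal{S}^*$ and $q>0$. If the mapping $\partial F$ is $q$-subregular at $\bar x$ for $0$, then the residual mapping $R$ is $\min\{q,1\}$-subregular at $\bar x$ for $0$. Conversely, if $R$ is $q$-subregular at $\bar x$ for $0$, then so is $\partial F$ at $\bar x$ for $0$.
   Context: Let $A\in\mathbb{R}^{m\times n}$, $b\in\mathbb{R}^m$, and let $\psi:\mathbb{R}^m\to(-\infty,\infty]$ and $g:\mathbb{R}^n\to(-\infty,\infty]$ be proper lower semicontinuous functions. Set $f(x):=\psi(Ax-b)$ and $F:=f+g$. Assume: (i) there is an open set $\mathcal{O}\supseteq\mathrm{dom}\,g$ such that $\psi$ is twice continuously differentiable on $A(\mathcal{O})-b$; (ii) $g$ is convex and continuous relative to $\mathrm{dom}\,g$; (iii) $\inf F>-\infty$ and $F$ is level bounded. $\partial F$ is the limiting subdifferential; for $x\in\mathrm{dom}\,g$, $\partial F(x)=\nabla f(x)+\partial g(x)$ and $\partial F(x)=\emptyset$ otherwise. $\mathcal{P}g(x):=\arg\min_z\{\frac12\|z-x\|^2+g(z)\}$, $R(x):=x-\mathcal{P}g(x-\nabla f(x))$, and $\mathcal{S}^*:=\{x\in\mathrm{dom}\,g:0\in\partial F(x)\}$; note $(\partial F)^{-1}(0)=R^{-1}(0)=\mathcal{S}^*$. A multifunction $\mathcal{F}:\mathbb{R}^n\rightrightarrows\mathbb{R}^n$ is $q$-subregular at $\bar x$ for $\bar y\in\mathcal{F}(\bar x)$ if there exist $\kappa>0,\delta>0$ with $\mathrm{dist}(x,\mathcal{F}^{-1}(\bar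 y))\le\kappa[\mathrm{dist}(\bar y,\mathcal{F}(x))]^q$ for all $x\in\mathbb{B}(\bar x,\delta)$ (with $\mathrm{dist}(\bar y,\emptyset)=\infty$). *)

theory Defs
  imports "HOL-Analysis.Analysis"
begin

definition edom :: "('a \<Rightarrow> ereal) \<Rightarrow> 'a set" where
  "edom h = {x. h x < \<infinity>}"

definition proper_fun :: "('a \<Rightarrow> ereal) \<Rightarrow> bool" where
  "proper_fun h \<longleftrightarrow> (\<forall>x. h x \<noteq> -\<infinity>) \<and> (\<exists>x. h x < \<infinity>)"

definition lsc_fun :: "('a::topological_space \<Rightarrow> ereal) \<Rightarrow> bool" where
  "lsc_fun h \<longleftrightarrow> (\<forall>c. closed {x. h x \<le> c})"

definition convex_efun :: "('a::real_vector \<Rightarrow> ereal) \<Rightarrow> bool" where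
  "convex_efun h \<longleftrightarrow> (\<forall>x y. \<forall>t::real. 0 < t \<and> t < 1 \<longrightarrow>
      h (t *\<^sub>R x + (1 - t) *\<^sub>R y) \<le> ereal t * h x + ereal (1 - t) * h y)"

definition C2_on :: "('a::euclidean_space \<Rightarrow> ereal) \<Rightarrow> 'a set \<Rightarrow> bool" where
  "C2_on h U \<longleftrightarrow> (\<forall>y\<in>U. \<bar>h y\<bar> \<noteq> \<infinity>) \<and>
     (\<exists>D :: 'a \<Rightarrow> ('a \<Rightarrow>\<^sub>L real). \<exists>D2 :: 'a \<Rightarrow> ('a \<Rightarrow>\<^sub>L ('a \<Rightarrow>\<^sub>L real)).
        (\<forall>y\<in>U. ((\<lambda>z. real_of_ereal (h z)) has_derivative blinfun_apply (D y)) (at y)) \<and>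
        (\<forall>y\<in>U. (D has_derivative blinfun_apply (D2 y)) (at y)) \<and>
        continuous_on U D2)"

definition regular_subdiff :: "('a::real_inner \<Rightarrow> ereal) \<Rightarrow> 'a \<Rightarrow> 'a set" where
  "regular_subdiff h x = {v. \<bar>h x\<bar> \<noteq> \<infinity> \<and>
     (\<forall>\<epsilon>>0. \<exists>\<delta>>0. \<forall>z\<in>ball x \<delta>.
        h z \<ge> h x + ereal (v \<bullet> (z - x) - \<epsilon> * norm (z - x)))}"

definition limiting_subdiff :: "('a::real_inner \<Rightarrow> ereal) \<Rightarrow> 'a \<Rightarrow> 'a set" where
  "limiting_subdiff h x = {v. \<exists>xs vs. xs \<longlonglongrightarrow> x \<and> (\<lambda>k. h (xs k)) \<longlonglongrightarrow> h x \<and>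
       vs \<longlonglongrightarrow> v \<and> (\<forall>k. vs k \<in> regular_subdiff h (xs k))}"

definition prox :: "('a::real_normed_vector \<Rightarrow> ereal) \<Rightarrow> 'a \<Rightarrow> 'a" where
  "prox g x = (THE z. \<forall>w. ereal (1/2 * (norm (z - x))\<^sup>2) + g z \<le> ereal (1/2 * (norm (w - x))\<^sup>2) + g w)"

(* q-subregularity of a multifunction; dist(y, {}) = \<infinity> *)
definition q_subregular :: "('a::metric_space \<Rightarrow> 'b::metric_space set) \<Rightarrow> 'a \<Rightarrow> 'b \<Rightarrow> real \<Rightarrow> bool" where
  "q_subregular M xb yb q \<longleftrightarrow> yb \<in> M xb \<and>
     (\<exists>\<kappa>>0. \<exists>\<delta>>0. \<forall>x\<in>cball xb \<delta>. M x \<noteq> {} \<longrightarrow>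
        infdist x {z. yb \<in> M z} \<le> \<kappa> * (infdist yb (M x)) powr q)"

end

theory Submission
  imports Defs
begin

(*
  Near xb the residual R x = x - prox g (x - grad f x) and the limiting subdifferential of
  F = f + g control each other.  If w is a limiting subgradient of F at x, then w - grad f x is a
  convex subgradient of g at x, i.e. x = prox g (x - grad f x + w); nonexpansiveness of prox gives
  norm (R x) <= norm w.  Since also every zero of R is a critical point of F, subregularity passes
  from R to the subdifferential of F with the same exponent.

  Conversely, y = x - R x = prox g (x - grad f x) carries the subgradient
  grad f y - grad f x + R x of F, whose norm is at most (1 + L) norm (R x) because grad f is
  locally L-Lipschitz (psi is C^2).  Subregularity of the subdifferential at y, the fact that
  its zeros near xb are zeros of R, and dist x y = norm (R x) give
  dist (x, zeros of R) <= kappa ((1 + L) norm (R x))^q + norm (R x), which is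
  O(norm (R x) ^ min q 1) because R x is small near xb.
*)

section \<open>Distances and lower semicontinuity\<close>

lemma infdist_lessE:
  assumes "infdist x A < t" "A \<noteq> {}"
  obtains a where "a \<in> A" "dist x a < t"
  using assms by (auto simp: infdist_notempty cINF_less_iff)

lemma infdist_le_if_locally_subset:
  assumes ne: "A \<noteq> {}" and le: "infdist y A \<le> t" and near: "dist y x0 + t < r"
    and sub: "\<And>z. z \<in> A \<Longrightarrow> dist z x0 < r \<Longrightarrow> z \<in> B"
  shows "infdist y B \<le> t"
proof (rule field_le_epsilon)
  fix e :: real assume "0 < e"
  define e' where "e' = min e (r - dist y x0 - t)"
  have "0 < e'" using \<open>0 < e\<close> near by (simp add: e'_def)
  with le obtain z where z: "z \<in> A" "dist y z < t + e'"
    using infdist_lessE[OF _ ne, of y "t + e'"] by force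
  have "dist z x0 \<le> dist y z + dist y x0" by (metis dist_commute dist_triangle)
  also have "\<dots> < r" using z(2) by (simp add: e'_def)
  finally have "z \<in> B" using sub z(1) by blast
  then have "infdist y B \<le> dist y z" by (rule infdist_le)
  then show "infdist y B \<le> t + e" using z(2) by (simp add: e'_def)
qed

lemma le_mult_infdist_powr:
  fixes S :: "'a::real_normed_vector set"
  assumes ne: "S \<noteq> {}" and \<kappa>: "\<kappa> > 0" and q: "q > 0"
    and bound: "\<And>w. w \<in> S \<Longrightarrow> a \<le> \<kappa> * norm w powr q"
  shows "a \<le> \<kappa> * infdist 0 S powr q"
proof (rule ccontr)
  assume "\<not> ?thesis"
  then have lt: "infdist 0 S powr q < a / \<kappa>" using \<kappa> by (simp add: field_simps)
  define c where "c = (a / \<kappa>) powr (1 / q)"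
  have "0 < a / \<kappa>" using lt powr_ge_zero order.strict_trans1 by blast
  then have c_pow: "c powr q = a / \<kappa>"
    using q by (simp add: c_def powr_powr powr_one del: powr_one')
  have "infdist 0 S < c"
    using powr_less_mono2[OF _ _ lt, of "1 / q"] q by (simp add: c_def powr_powr infdist_nonneg)
  then obtain w where "w \<in> S" "norm w < c" by (auto elim: infdist_lessE[OF _ ne])
  then have "\<kappa> * norm w powr q < a"
    using powr_less_mono2[OF q, of "norm w" c] c_pow \<kappa> by (simp add: field_simps)
  with bound[OF \<open>w \<in> S\<close>] show False by simp
qed

lemma le_if_le_add_mult_all_pos:
  fixes a b c :: real
  assumes "\<And>\<epsilon>. 0 < \<epsilon> \<Longrightarrow> a \<le> b + \<epsilon> * c"
  shows "a \<le> b"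
proof (rule tendsto_le[OF trivial_limit_at_right_real])
  show "((\<lambda>\<epsilon>. b + \<epsilon> * c) \<longlongrightarrow> b) (at_right 0)"
    by (auto intro!: tendsto_eq_intros)
  show "\<forall>\<^sub>F \<epsilon> in at_right 0. a \<le> b + \<epsilon> * c"
    using eventually_at_right_less by (rule eventually_mono) (rule assms)
qed simp

lemma lsc_fun_le_limit:
  fixes h :: "'a::topological_space \<Rightarrow> ereal"
  assumes "lsc_fun h" "xs \<longlonglongrightarrow> x" "\<forall>\<^sub>F k in sequentially. h (xs k) \<le> ereal (c k)"
    "c \<longlonglongrightarrow> c0"
  shows "h x \<le> ereal c0"
proof (rule ereal_le_epsilon2)
  fix e :: real assume "0 < e"
  then have "\<forall>\<^sub>F k in sequentially. c k < c0 + e"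
    using assms(4) by (simp add: order_tendstoD(2))
  with assms(3) have ev: "\<forall>\<^sub>F k in sequentially. xs k \<in> {z. h z \<le> ereal (c0 + e)}"
    by eventually_elim (use order_trans in force)
  have "closed {z. h z \<le> ereal (c0 + e)}" using assms(1) unfolding lsc_fun_def by blast
  from Lim_in_closed_set[OF this ev _ assms(2)] show "h x \<le> ereal c0 + ereal e" by simp
qed

lemma lsc_fun_add_continuous:
  fixes h :: "'a::metric_space \<Rightarrow> ereal"
  assumes "continuous_on UNIV k" "lsc_fun h" "\<And>x. h x \<noteq> -\<infinity>"
  shows "lsc_fun (\<lambda>x. ereal (k x) + h x)"
  unfolding lsc_fun_def
proof
  fix c :: ereal
  show "closed {x. ereal (k x) + h x \<le> c}"
  proof (cases c)
    case (real c')
    show ?thesis unfolding closed_sequential_limits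
    proof (intro allI impI, elim conjE)
      fix xs x assume xs: "\<forall>n. xs n \<in> {x. ereal (k x) + h x \<le> c}" "xs \<longlonglongrightarrow> x"
      have lim: "(\<lambda>n. c' - k (xs n)) \<longlonglongrightarrow> c' - k x"
        by (intro tendsto_intros continuous_on_tendsto_compose[OF assms(1) xs(2)]) auto
      have "h (xs n) \<le> ereal (c' - k (xs n))" for n
        using spec[OF xs(1), of n] real by (cases "h (xs n)") (auto simp: algebra_simps)
      then have "h x \<le> ereal (c' - k x)"
        by (intro lsc_fun_le_limit[OF assms(2) xs(2) always_eventually lim]) blast
      then show "x \<in> {x. ereal (k x) + h x \<le> c}" using real
        by (cases "h x") (auto simp: algebra_simps)
    qed
  qed (use assms(3) in auto)
qed

lemma lsc_fun_attains_min:
  fixes h :: "'a::heine_borel \<Rightarrow> ereal"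
  assumes lsc: "lsc_fun h" and fin: "h x0 < \<infinity>" and below: "\<And>z. ereal B \<le> h z"
    and bounded: "\<And>K. bounded {z. h z \<le> ereal K}"
  obtains z where "\<And>w. h z \<le> h w"
proof -
  define m where "m = Inf (range h)"
  have "m \<le> h x0" "ereal B \<le> m"
    unfolding m_def by (auto intro: Inf_lower Inf_greatest below)
  then obtain mr where mr: "m = ereal mr" using fin by (cases m) auto
  define S where "S k = {z. h z \<le> ereal (mr + inverse (real (Suc k)))}" for k
  have "\<Inter>(range S) \<noteq> {}"
  proof (rule compact_nest)
    fix k
    show "compact (S k)"
      using lsc bounded unfolding S_def lsc_fun_def compact_eq_bounded_closed by blast
    have "m < ereal (mr + inverse (real (Suc k)))" using mr by simp
    then show "S k \<noteq> {}" unfolding S_def m_def Inf_less_iff by (auto intro: less_imp_le)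
  next
    fix k l :: nat assume "k \<le> l"
    then have "inverse (real (Suc l)) \<le> inverse (real (Suc k))" by (simp add: field_simps)
    then show "S l \<subseteq> S k" unfolding S_def using order_trans by fastforce
  qed
  then obtain z where z: "\<And>k. h z \<le> ereal (mr + inverse (real (Suc k)))" unfolding S_def by blast
  have lim: "(\<lambda>k. mr + inverse (real (Suc k))) \<longlonglongrightarrow> mr"
    using tendsto_add[OF tendsto_const LIMSEQ_inverse_real_of_nat] by simp
  have "h z \<le> m"
    unfolding mr using z by (intro lsc_fun_le_limit[OF lsc tendsto_const always_eventually lim]) blast
  then show thesis using that by (metis Inf_lower m_def order_trans rangeI)
qed

section \<open>Subregularity of a multifunction versus a residual\<close>

lemma q_subregular_from_residual:
  fixes M :: "'a::real_normed_vector \<Rightarrow> 'b::real_normed_vector set" and r :: "'a \<Rightarrow> 'b"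
  assumes sub: "q_subregular (\<lambda>x. {r x}) xb 0 q" and q: "q > 0" and "0 \<in> M xb"
    and zeros: "\<And>z. r z = 0 \<Longrightarrow> 0 \<in> M z"
    and dominated: "\<forall>\<^sub>F x in nhds xb. \<forall>w\<in>M x. norm (r x) \<le> norm w"
  shows "q_subregular M xb 0 q"
proof -
  obtain \<kappa> \<delta> where \<kappa>: "\<kappa> > 0" and "\<delta> > 0"
    and H: "\<And>x. x \<in> cball xb \<delta> \<Longrightarrow> infdist x {z. 0 \<in> {r z}} \<le> \<kappa> * norm (r x) powr q"
    using sub unfolding q_subregular_def by auto
  obtain \<rho> where "\<rho> > 0" and dom: "\<And>x w. dist x xb \<le> \<rho> \<Longrightarrow> w \<in> M x \<Longrightarrow> norm (r x) \<le> norm w"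
    using dominated unfolding eventually_nhds_metric_le by blast
  have "infdist x {z. 0 \<in> M z} \<le> \<kappa> * infdist 0 (M x) powr q"
    if x: "x \<in> cball xb (min \<delta> \<rho>)" and ne: "M x \<noteq> {}" for x
  proof (rule le_mult_infdist_powr[OF ne \<kappa> q])
    fix w assume "w \<in> M x"
    have "infdist x {z. 0 \<in> M z} \<le> infdist x {z. 0 \<in> {r z}}"
      using zeros sub by (intro infdist_mono) (auto simp: q_subregular_def)
    also have "\<dots> \<le> \<kappa> * norm (r x) powr q" using H x by simp
    also have "\<dots> \<le> \<kappa> * norm w powr q"
      using dom[OF _ \<open>w \<in> M x\<close>] x \<kappa> q by (auto intro!: mult_left_mono powr_mono2 simp: dist_commute)
    finally show "infdist x {z. 0 \<in> M z} \<le> \<kappa> * norm w powr q" .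
  qed
  then show ?thesis
    unfolding q_subregular_def using \<open>0 \<in> M xb\<close> \<kappa> \<open>\<delta> > 0\<close> \<open>\<rho> > 0\<close>
    by (intro conjI exI[of _ \<kappa>] exI[of _ "min \<delta> \<rho>"]) auto
qed

lemma eventually_norm_and_powr_small:
  fixes r :: "'a::metric_space \<Rightarrow> 'b::real_normed_vector"
  assumes r: "isCont r xb" "r xb = 0" and q: "q > 0" and "\<sigma> > 0"
  shows "\<forall>\<^sub>F x in nhds xb. norm (r x) < min 1 \<sigma> \<and> K * norm (r x) powr q < \<sigma>"
proof -
  have "(r \<longlongrightarrow> 0) (nhds xb)"
    using r tendsto_at_iff_tendsto_nhds[of r xb] by (simp add: isCont_def)
  then have small: "((\<lambda>x. norm (r x)) \<longlongrightarrow> 0) (nhds xb)" by (rule tendsto_norm_zero)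
  have "((\<lambda>x. K * norm (r x) powr q) \<longlongrightarrow> K * 0) (nhds xb)"
    by (intro tendsto_mult tendsto_const tendsto_zero_powrI[OF small tendsto_const _ q]) simp
  then have "\<forall>\<^sub>F x in nhds xb. K * norm (r x) powr q < \<sigma>"
    using order_tendstoD(2) \<open>\<sigma> > 0\<close> by simp
  moreover have "\<forall>\<^sub>F x in nhds xb. norm (r x) < min 1 \<sigma>"
    using order_tendstoD(2)[OF small, of "min 1 \<sigma>"] \<open>\<sigma> > 0\<close> by linarith
  ultimately show ?thesis by eventually_elim simp
qed

lemma powr_add_le_min_one:
  fixes t :: real
  assumes "0 \<le> K" "0 \<le> t" "t \<le> 1"
  shows "K * t powr q + t \<le> (K + 1) * t powr min q 1"
proof -
  have "t powr q \<le> t powr min q 1" using assms(2,3) by (intro powr_mono') auto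
  moreover have "t \<le> t powr min q 1" using powr_mono'[of "min q 1" 1 t] assms(2,3) by simp
  ultimately show ?thesis using assms(1,2) by (simp add: distrib_right mult_left_mono add_mono)
qed

lemma q_subregular_residual_from_subregular:
  fixes M :: "'a::real_normed_vector \<Rightarrow> 'b::real_normed_vector set" and r :: "'a \<Rightarrow> 'b"
  assumes sub: "q_subregular M xb 0 q" and q: "q > 0" and c: "c \<ge> 0"
    and r: "isCont r xb" "r xb = 0"
    and zeros: "\<forall>\<^sub>F z in nhds xb. 0 \<in> M z \<longrightarrow> r z = 0"
    and near: "\<forall>\<^sub>F x in nhds xb. \<exists>y. dist x y \<le> norm (r x) \<and> (\<exists>w\<in>M y. norm w \<le> c * norm (r x))"
  shows "q_subregular (\<lambda>x. {r x}) xb 0 (min q 1)"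
proof -
  let ?ZM = "{z. 0 \<in> M z}" and ?ZR = "{z. 0 \<in> {r z}}"
  obtain \<kappa> \<delta> where \<kappa>: "\<kappa> > 0" and "\<delta> > 0"
    and H: "\<And>y. y \<in> cball xb \<delta> \<Longrightarrow> M y \<noteq> {} \<Longrightarrow> infdist y ?ZM \<le> \<kappa> * infdist 0 (M y) powr q"
    using sub unfolding q_subregular_def by blast
  have ZM_ne: "?ZM \<noteq> {}" using sub unfolding q_subregular_def by blast
  obtain \<rho> where "\<rho> > 0" and loc: "\<And>z. dist z xb < \<rho> \<Longrightarrow> 0 \<in> M z \<Longrightarrow> r z = 0"
    using zeros unfolding eventually_nhds_metric by blast
  \<comment> \<open>With 3 \<sigma> \<le> min \<rho> \<delta>, the point y found below lies in cball xb \<delta>, and the zeros of M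
    closest to y lie in ball xb \<rho>, where they are zeros of r.\<close>
  define \<sigma> where "\<sigma> = min \<rho> \<delta> / 3"
  define K where "K = \<kappa> * c powr q"
  have "\<sigma> > 0" using \<open>\<rho> > 0\<close> \<open>\<delta> > 0\<close> by (simp add: \<sigma>_def)
  have K: "K \<ge> 0" using \<kappa> by (simp add: K_def)
  have "\<forall>\<^sub>F x in nhds xb. x \<in> ball xb \<sigma>" by (rule eventually_nhds_ball[OF \<open>\<sigma> > 0\<close>])
  moreover have "\<forall>\<^sub>F x in nhds xb. norm (r x) < min 1 \<sigma> \<and> K * norm (r x) powr q < \<sigma>"
    by (rule eventually_norm_and_powr_small[OF r q \<open>\<sigma> > 0\<close>])
  ultimately have "\<forall>\<^sub>F x in nhds xb. dist x xb < \<sigma> \<and> norm (r x) < min 1 \<sigma> \<and> K * norm (r x) powr q < \<sigma> \<and>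
      (\<exists>y. dist x y \<le> norm (r x) \<and> (\<exists>w\<in>M y. norm w \<le> c * norm (r x)))"
    using near by eventually_elim (auto simp: dist_commute)
  then obtain \<eta> where "\<eta> > 0" and all: "\<And>x. dist x xb \<le> \<eta> \<Longrightarrow> dist x xb < \<sigma> \<and>
      norm (r x) < min 1 \<sigma> \<and> K * norm (r x) powr q < \<sigma> \<and>
      (\<exists>y. dist x y \<le> norm (r x) \<and> (\<exists>w\<in>M y. norm w \<le> c * norm (r x)))"
    unfolding eventually_nhds_metric_le by blast
  have "infdist x ?ZR \<le> (K + 1) * infdist 0 {r x} powr min q 1" if "x \<in> cball xb \<eta>" for x
  proof -
    define t where "t = norm (r x)"
    from all[of x] that obtain y w where x: "dist x xb < \<sigma>" "t \<le> 1" "t < \<sigma>" "K * t powr q < \<sigma>"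
      and y: "dist x y \<le> t" and w: "w \<in> M y" "norm w \<le> c * t"
      by (auto simp: t_def dist_commute)
    have dist_y: "dist y xb < 2 * \<sigma>" using x y dist_triangle[of y xb x] by (simp add: dist_commute)
    then have "y \<in> cball xb \<delta>"
      using min.cobounded2[of \<rho> \<delta>] zero_le_dist[of y xb]
      unfolding \<sigma>_def mem_cball dist_commute[of xb] by linarith
    then have "infdist y ?ZM \<le> \<kappa> * infdist 0 (M y) powr q" using H w(1) by blast
    also have "\<dots> \<le> \<kappa> * (c * t) powr q"
      using infdist_le[OF w(1), of 0] w(2) \<kappa> q
      by (intro mult_left_mono powr_mono2) (auto simp: infdist_nonneg)
    also have "\<dots> = K * t powr q" using c by (simp add: K_def t_def powr_mult)
    finally have "infdist y ?ZR \<le> K * t powr q"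
      by (rule infdist_le_if_locally_subset[OF ZM_ne])
        (use dist_y x loc in \<open>auto simp: \<sigma>_def\<close>)
    then have "infdist x ?ZR \<le> K * t powr q + t" using infdist_triangle[of x ?ZR y] y by linarith
    also have "\<dots> \<le> (K + 1) * t powr min q 1"
      using K x(2) by (intro powr_add_le_min_one) (simp_all add: t_def)
    finally show ?thesis by (simp add: t_def)
  qed
  then show ?thesis
    unfolding q_subregular_def using r(2) K \<open>\<eta> > 0\<close>
    by (intro conjI exI[of _ "K + 1"] exI[of _ \<eta>]) auto
qed

section \<open>Regular, limiting and convex subgradients; the proximal map\<close>

lemma regular_subdiff_imp_limiting: "v \<in> regular_subdiff h x \<Longrightarrow> v \<in> limiting_subdiff h x"
  unfolding limiting_subdiff_def by (intro CollectI exI[of _ "\<lambda>k. x"] exI[of _ "\<lambda>k. v"]) auto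

lemma regular_subdiff_transfer:
  assumes v: "v \<in> regular_subdiff h1 y" and fin: "\<bar>h2 y\<bar> \<noteq> \<infinity>"
    and near: "\<And>e. e > 0 \<Longrightarrow> \<exists>\<delta>>0. \<forall>z\<in>ball y \<delta>. \<forall>\<epsilon>.
       h1 y + ereal (v \<bullet> (z - y) - \<epsilon> * norm (z - y)) \<le> h1 z \<longrightarrow>
       h2 y + ereal (u \<bullet> (z - y) - (\<epsilon> + e) * norm (z - y)) \<le> h2 z"
  shows "u \<in> regular_subdiff h2 y"
proof -
  have "\<exists>\<delta>>0. \<forall>z\<in>ball y \<delta>. h2 y + ereal (u \<bullet> (z - y) - \<epsilon> * norm (z - y)) \<le> h2 z"
    if "\<epsilon> > 0" for \<epsilon>
  proof -
    obtain \<delta>1 where "\<delta>1 > 0"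
      and v_near: "\<And>z. z \<in> ball y \<delta>1 \<Longrightarrow> h1 y + ereal (v \<bullet> (z - y) - \<epsilon> / 2 * norm (z - y)) \<le> h1 z"
      using v \<open>\<epsilon> > 0\<close> unfolding regular_subdiff_def by (auto dest!: spec[of _ "\<epsilon> / 2"])
    obtain \<delta>2 where "\<delta>2 > 0" and step: "\<forall>z\<in>ball y \<delta>2. \<forall>\<epsilon>'.
        h1 y + ereal (v \<bullet> (z - y) - \<epsilon>' * norm (z - y)) \<le> h1 z \<longrightarrow>
        h2 y + ereal (u \<bullet> (z - y) - (\<epsilon>' + \<epsilon> / 2) * norm (z - y)) \<le> h2 z"
      using near[of "\<epsilon> / 2"] \<open>\<epsilon> > 0\<close> by auto
    show ?thesis
    proof (intro exI[of _ "min \<delta>1 \<delta>2"] conjI ballI)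
      show "min \<delta>1 \<delta>2 > 0" using \<open>\<delta>1 > 0\<close> \<open>\<delta>2 > 0\<close> by simp
      fix z assume "z \<in> ball y (min \<delta>1 \<delta>2)"
      then have "z \<in> ball y \<delta>1" "z \<in> ball y \<delta>2" by auto
      then have "h2 y + ereal (u \<bullet> (z - y) - (\<epsilon> / 2 + \<epsilon> / 2) * norm (z - y)) \<le> h2 z"
        using step v_near by blast
      then show "h2 y + ereal (u \<bullet> (z - y) - \<epsilon> * norm (z - y)) \<le> h2 z" by simp
    qed
  qed
  then show ?thesis using fin unfolding regular_subdiff_def by simp
qed

lemma regular_subdiff_add_differentiable:
  fixes f g :: "'a::real_inner \<Rightarrow> ereal"
  assumes S: "open S" "y \<in> S" and f_fin: "\<And>x. x \<in> S \<Longrightarrow> \<bar>f x\<bar> \<noteq> \<infinity>"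
    and der: "((\<lambda>z. real_of_ereal (f z)) has_derivative (\<lambda>h. d \<bullet> h)) (at y)"
  shows "v \<in> regular_subdiff (\<lambda>x. f x + g x) y \<longleftrightarrow> v - d \<in> regular_subdiff g y"
proof -
  let ?fr = "\<lambda>z. real_of_ereal (f z)"
  have f_eq: "f x = ereal (?fr x)" if "x \<in> S" for x using f_fin[OF that] by (cases "f x") auto
  have near: "\<exists>\<delta>>0. \<forall>z\<in>ball y \<delta>. \<forall>\<epsilon>.
      (f y + g y + ereal (v \<bullet> (z - y) - \<epsilon> * norm (z - y)) \<le> f z + g z \<longrightarrow>
        g y + ereal ((v - d) \<bullet> (z - y) - (\<epsilon> + e) * norm (z - y)) \<le> g z) \<and>
      (g y + ereal ((v - d) \<bullet> (z - y) - \<epsilon> * norm (z - y)) \<le> g z \<longrightarrow>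
        f y + g y + ereal (v \<bullet> (z - y) - (\<epsilon> + e) * norm (z - y)) \<le> f z + g z)"
    if "e > 0" "g y = ereal ry" for e ry
  proof -
    obtain \<delta>1 where "\<delta>1 > 0" and \<delta>1: "\<forall>z. norm (z - y) < \<delta>1 \<longrightarrow>
        \<bar>?fr z - ?fr y - d \<bullet> (z - y)\<bar> \<le> e * norm (z - y)"
      using der \<open>e > 0\<close> unfolding has_derivative_at_alt real_norm_def by blast
    obtain \<delta>2 where "\<delta>2 > 0" "ball y \<delta>2 \<subseteq> S" using S open_contains_ball by blast
    have "(f y + g y + ereal (v \<bullet> (z - y) - \<epsilon> * norm (z - y)) \<le> f z + g z \<longrightarrow>
        g y + ereal ((v - d) \<bullet> (z - y) - (\<epsilon> + e) * norm (z - y)) \<le> g z) \<and>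
      (g y + ereal ((v - d) \<bullet> (z - y) - \<epsilon> * norm (z - y)) \<le> g z \<longrightarrow>
        f y + g y + ereal (v \<bullet> (z - y) - (\<epsilon> + e) * norm (z - y)) \<le> f z + g z)"
      if "z \<in> ball y (min \<delta>1 \<delta>2)" for z \<epsilon>
    proof -
      define a b where "a = ?fr z" and "b = ?fr y"
      have "z \<in> S" "\<bar>a - b - d \<bullet> (z - y)\<bar> \<le> e * norm (z - y)"
        using that \<delta>1 \<open>ball y \<delta>2 \<subseteq> S\<close> by (auto simp: a_def b_def dist_norm norm_minus_commute)
      moreover have "f z = ereal a" "f y = ereal b"
        using f_eq[OF \<open>z \<in> S\<close>] f_eq[OF S(2)] by (simp_all add: a_def b_def)
      ultimately show ?thesis using \<open>g y = ereal ry\<close>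
        by (cases "g z") (auto simp: inner_diff_left abs_le_iff algebra_simps)
    qed
    then show ?thesis using \<open>\<delta>1 > 0\<close> \<open>\<delta>2 > 0\<close> by (intro exI[of _ "min \<delta>1 \<delta>2"]) auto
  qed
  have fin: "\<bar>f y + g y\<bar> \<noteq> \<infinity> \<longleftrightarrow> \<bar>g y\<bar> \<noteq> \<infinity>"
    using f_fin[OF S(2)] by (cases "g y"; cases "f y") auto
  show ?thesis
  proof
    assume v: "v \<in> regular_subdiff (\<lambda>x. f x + g x) y"
    then obtain ry where "g y = ereal ry" using fin unfolding regular_subdiff_def by (cases "g y") auto
    with near show "v - d \<in> regular_subdiff g y"
      by (intro regular_subdiff_transfer[OF v]) (simp, meson)
  next
    assume v: "v - d \<in> regular_subdiff g y"
    then obtain ry where "g y = ereal ry" unfolding regular_subdiff_def by (cases "g y") auto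
    with near fin show "v \<in> regular_subdiff (\<lambda>x. f x + g x) y"
      by (intro regular_subdiff_transfer[OF v]) (simp, meson)
  qed
qed

definition convex_subdiff :: "('a::real_inner \<Rightarrow> ereal) \<Rightarrow> 'a \<Rightarrow> 'a set" where
  "convex_subdiff g x = {v. g x < \<infinity> \<and> (\<forall>w. g x + ereal (v \<bullet> (w - x)) \<le> g w)}"

lemma norm_diff_sq_expand:
  fixes w z u :: "'a::real_inner"
  shows "(norm (w - u))\<^sup>2 = (norm (z - u))\<^sup>2 + 2 * ((z - u) \<bullet> (w - z)) + (norm (w - z))\<^sup>2"
  unfolding power2_norm_eq_inner by (simp add: inner_diff_left inner_diff_right inner_commute)

locale proper_lsc_convex =
  fixes g :: "'a::euclidean_space \<Rightarrow> ereal"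
  assumes proper: "proper_fun g" and lsc: "lsc_fun g" and convex: "convex_efun g"
begin

lemma not_MInfty [simp]: "g x \<noteq> -\<infinity>"
  using proper unfolding proper_fun_def by auto

lemma finite_value: obtains x0 r0 where "g x0 = ereal r0"
proof -
  obtain x0 where "g x0 < \<infinity>" using proper unfolding proper_fun_def by auto
  then show thesis using that by (cases "g x0") auto
qed

lemma segment_le:
  assumes "0 < t" "t < 1" "g w = ereal a" "g y = ereal b"
  shows "g (y + t *\<^sub>R (w - y)) \<le> ereal (t * a + (1 - t) * b)"
proof -
  have "g (t *\<^sub>R w + (1 - t) *\<^sub>R y) \<le> ereal t * g w + ereal (1 - t) * g y"
    using convex assms(1,2) unfolding convex_efun_def by blast
  moreover have "y + t *\<^sub>R (w - y) = t *\<^sub>R w + (1 - t) *\<^sub>R y" by (simp add: algebra_simps)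
  ultimately show ?thesis using assms(3,4) by simp
qed

lemma lower_bound_from_ball:
  assumes r0: "g x0 = ereal r0" and r: "r > 0"
    and above: "\<And>w. dist x0 w < r \<Longrightarrow> ereal (r0 - 1) < g w"
  shows "ereal (r0 - 1 - 2 / r * norm (z - x0)) \<le> g z"
proof (cases "g z")
  case (real gz)
  show ?thesis
  proof (cases "norm (z - x0) < r")
    case True
    then have "ereal (r0 - 1) < g z" by (intro above) (simp add: dist_norm norm_minus_commute)
    moreover have "0 \<le> 2 / r * norm (z - x0)" using r by simp
    ultimately show ?thesis using real by simp
  next
    case False
    define t where "t = r / (2 * norm (z - x0))"
    have nz: "norm (z - x0) > 0" using False r by linarith
    have t: "0 < t" "t < 1" using False r nz by (auto simp: t_def field_simps)
    have "norm (t *\<^sub>R (z - x0)) = r / 2" using nz t r by (simp add: t_def)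
    then have "ereal (r0 - 1) < g (x0 + t *\<^sub>R (z - x0))" using r by (intro above) (simp add: dist_norm)
    also have "\<dots> \<le> ereal (t * gz + (1 - t) * r0)" by (rule segment_le[OF t real r0])
    finally have "- 1 / t < gz - r0" using t by (simp add: field_simps)
    moreover have "1 / t = 2 / r * norm (z - x0)" using nz r by (simp add: t_def field_simps)
    ultimately show ?thesis using real by simp
  qed
qed auto

lemma norm_minorant: obtains a c where "0 \<le> c" "\<And>z. ereal (a - c * norm z) \<le> g z"
proof -
  obtain x0 r0 where r0: "g x0 = ereal r0" by (rule finite_value)
  have "open (- {x. g x \<le> ereal (r0 - 1)})" using lsc unfolding lsc_fun_def by auto
  moreover have "x0 \<in> - {x. g x \<le> ereal (r0 - 1)}" using r0 by simp
  ultimately obtain r where r: "r > 0" "ball x0 r \<subseteq> - {x. g x \<le> ereal (r0 - 1)}"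
    by (meson open_contains_ball)
  then have near: "ereal (r0 - 1 - 2 / r * norm (z - x0)) \<le> g z" for z
    by (intro lower_bound_from_ball[OF r0 r(1)]) (auto simp: not_le)
  show thesis
  proof (rule that)
    show "0 \<le> 2 / r" using r by simp
    fix z
    have "2 / r * norm (z - x0) \<le> 2 / r * norm z + 2 / r * norm x0"
      using r mult_left_mono[OF norm_triangle_ineq4[of z x0], of "2 / r"] by (simp add: distrib_left)
    then have "ereal (r0 - 1 - 2 / r * norm x0 - 2 / r * norm z) \<le> ereal (r0 - 1 - 2 / r * norm (z - x0))"
      by simp
    then show "ereal (r0 - 1 - 2 / r * norm x0 - 2 / r * norm z) \<le> g z"
      using near[of z] by (rule order_trans)
  qed
qed

lemma convex_subdiff_finite:
  assumes "v \<in> convex_subdiff g x" obtains r where "g x = ereal r"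
  using assms not_MInfty[of x] unfolding convex_subdiff_def by (cases "g x") auto

lemma convex_subdiff_monotone:
  assumes "u \<in> convex_subdiff g x" "v \<in> convex_subdiff g y"
  shows "0 \<le> (u - v) \<bullet> (x - y)"
proof -
  obtain rx ry where r: "g x = ereal rx" "g y = ereal ry"
    using assms by (meson convex_subdiff_finite)
  have "g x + ereal (u \<bullet> (y - x)) \<le> g y" "g y + ereal (v \<bullet> (x - y)) \<le> g x"
    using assms unfolding convex_subdiff_def by blast+
  then show ?thesis using r by (simp add: inner_diff_left inner_diff_right inner_commute)
qed

lemma convex_subdiff_closed_graph:
  assumes xs: "xs \<longlonglongrightarrow> x" and vs: "vs \<longlonglongrightarrow> v"
    and ev: "\<forall>\<^sub>F k in sequentially. vs k \<in> convex_subdiff g (xs k)"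
  shows "v \<in> convex_subdiff g x"
proof -
  have below: "g x \<le> ereal (rw - v \<bullet> (w - x))" if rw: "g w = ereal rw" for w rw
  proof (rule lsc_fun_le_limit[OF lsc xs])
    show "\<forall>\<^sub>F k in sequentially. g (xs k) \<le> ereal (rw - vs k \<bullet> (w - xs k))"
      using ev
    proof eventually_elim
      case (elim k)
      then obtain a where "g (xs k) = ereal a" by (rule convex_subdiff_finite)
      moreover have "g (xs k) + ereal (vs k \<bullet> (w - xs k)) \<le> g w"
        using elim unfolding convex_subdiff_def by blast
      ultimately show ?case using rw by simp
    qed
    show "(\<lambda>k. rw - vs k \<bullet> (w - xs k)) \<longlonglongrightarrow> rw - v \<bullet> (w - x)"
      by (intro tendsto_intros vs xs)
  qed
  obtain x0 r0 where "g x0 = ereal r0" by (rule finite_value)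
  from below[OF this] have "g x < \<infinity>" using le_less_trans by fastforce
  moreover have "g x + ereal (v \<bullet> (w - x)) \<le> g w" for w
  proof (cases "g w")
    case (real rw)
    with below[OF real] show ?thesis by (cases "g x") auto
  qed auto
  ultimately show ?thesis unfolding convex_subdiff_def by blast
qed

lemma convex_subdiff_imp_regular_subdiff:
  assumes "v \<in> convex_subdiff g x" shows "v \<in> regular_subdiff g x"
proof -
  obtain r where "g x = ereal r" using assms by (rule convex_subdiff_finite)
  moreover have "g x + ereal (v \<bullet> (z - x) - \<epsilon> * norm (z - x)) \<le> g z" if "\<epsilon> > 0" for \<epsilon> z
  proof -
    have "g x + ereal (v \<bullet> (z - x) - \<epsilon> * norm (z - x)) \<le> g x + ereal (v \<bullet> (z - x))"
      using that by (intro add_left_mono) simp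
    also have "\<dots> \<le> g z" using assms unfolding convex_subdiff_def by blast
    finally show ?thesis .
  qed
  ultimately show ?thesis unfolding regular_subdiff_def by (auto intro: exI[of _ 1])
qed

lemma regular_subdiff_imp_convex_subdiff:
  assumes v: "v \<in> regular_subdiff g y" shows "v \<in> convex_subdiff g y"
proof -
  from v obtain ry where ry: "g y = ereal ry"
    unfolding regular_subdiff_def by (cases "g y") auto
  have "ry + v \<bullet> (w - y) \<le> rw" if rw: "g w = ereal rw" for w rw
  proof (rule le_if_le_add_mult_all_pos)
    fix \<epsilon> :: real assume "0 < \<epsilon>"
    then obtain \<delta> where "\<delta> > 0"
      and loc: "\<And>z. z \<in> ball y \<delta> \<Longrightarrow> g y + ereal (v \<bullet> (z - y) - \<epsilon> * norm (z - y)) \<le> g z"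
      using v unfolding regular_subdiff_def by blast
    define N where "N = norm (w - y) + 1"
    have N: "0 < N" "norm (w - y) \<le> N" by (simp_all add: N_def add_nonneg_pos)
    define t where "t = min (1/2) (\<delta> / (2 * N))"
    have t: "0 < t" "t < 1" using \<open>\<delta> > 0\<close> N by (auto simp: t_def)
    have "t * norm (w - y) \<le> \<delta> / (2 * N) * N"
      unfolding t_def using N \<open>\<delta> > 0\<close> by (intro mult_mono) auto
    also have "\<dots> < \<delta>" using \<open>\<delta> > 0\<close> N by simp
    finally have "t * norm (w - y) < \<delta>" .
    then have "g y + ereal (t * (v \<bullet> (w - y)) - \<epsilon> * (t * norm (w - y))) \<le> g (y + t *\<^sub>R (w - y))"
      using loc[of "y + t *\<^sub>R (w - y)"] t by (simp add: dist_norm)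
    also have "\<dots> \<le> ereal (t * rw + (1 - t) * ry)" by (rule segment_le[OF t rw ry])
    finally have "t * (ry + v \<bullet> (w - y)) \<le> t * (rw + \<epsilon> * norm (w - y))"
      using ry t by (simp add: algebra_simps)
    then show "ry + v \<bullet> (w - y) \<le> rw + \<epsilon> * norm (w - y)" using t by simp
  qed
  then have "g y + ereal (v \<bullet> (w - y)) \<le> g w" for w
    using ry by (cases "g w") auto
  then show ?thesis using ry unfolding convex_subdiff_def by simp
qed

lemma regular_subdiff_eq_convex_subdiff: "regular_subdiff g x = convex_subdiff g x"
  using regular_subdiff_imp_convex_subdiff convex_subdiff_imp_regular_subdiff by blast

lemma prox_objective_coercive:
  obtains B where "\<And>z. ereal (norm (z - u) + B) \<le> ereal (1/2 * (norm (z - u))\<^sup>2) + g z"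
proof -
  obtain a c where c: "0 \<le> c" and minor: "\<And>z. ereal (a - c * norm z) \<le> g z"
    using norm_minorant by blast
  define B where "B = a - c * norm u - (c + 1)\<^sup>2 / 2"
  have "ereal (norm (z - u) + B) \<le> ereal (1/2 * (norm (z - u))\<^sup>2) + g z" for z
  proof -
    define s where "s = norm (z - u)"
    have "c * norm z \<le> c * norm u + c * s"
      using mult_left_mono[OF norm_triangle_sub[of z u] c] by (simp add: s_def distrib_left)
    moreover have "0 \<le> (s - c - 1)\<^sup>2" by simp
    ultimately have "s + B \<le> 1/2 * s\<^sup>2 + (a - c * norm z)"
      unfolding B_def power2_eq_square by (simp add: field_simps)
    then have "ereal (norm (z - u) + B) \<le> ereal (1/2 * (norm (z - u))\<^sup>2) + ereal (a - c * norm z)"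
      by (simp add: s_def)
    also have "\<dots> \<le> ereal (1/2 * (norm (z - u))\<^sup>2) + g z" by (rule add_left_mono[OF minor])
    finally show ?thesis .
  qed
  then show thesis by (rule that)
qed

lemma prox_objective_has_min:
  obtains z where "\<And>w. ereal (1/2 * (norm (z - u))\<^sup>2) + g z \<le> ereal (1/2 * (norm (w - u))\<^sup>2) + g w"
proof -
  let ?h = "\<lambda>z. ereal (1/2 * (norm (z - u))\<^sup>2) + g z"
  obtain B where B: "\<And>z. ereal (norm (z - u) + B) \<le> ?h z" using prox_objective_coercive[of u] by blast
  obtain x0 r0 where "g x0 = ereal r0" by (rule finite_value)
  then have fin: "?h x0 < \<infinity>" by simp
  have "lsc_fun ?h" by (rule lsc_fun_add_continuous) (auto intro!: continuous_intros lsc)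
  moreover have "ereal B \<le> ?h z" for z
    by (rule order_trans[OF _ B[of z]]) simp
  moreover have "bounded {z. ?h z \<le> ereal K}" for K
  proof -
    have "{z. ?h z \<le> ereal K} \<subseteq> cball u (K - B)"
    proof
      fix z assume "z \<in> {z. ?h z \<le> ereal K}"
      then have "ereal (norm (z - u) + B) \<le> ereal K" using B[of z] order_trans by blast
      then show "z \<in> cball u (K - B)" by (simp add: dist_norm norm_minus_commute)
    qed
    then show ?thesis by (rule bounded_subset[OF bounded_cball])
  qed
  ultimately show thesis using lsc_fun_attains_min[where h = ?h, OF _ fin] that by blast
qed

lemma prox_min_imp_subdiff:
  assumes min: "\<And>w. ereal (1/2 * (norm (z - u))\<^sup>2) + g z \<le> ereal (1/2 * (norm (w - u))\<^sup>2) + g w"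
  shows "u - z \<in> convex_subdiff g z"
proof -
  obtain x0 r0 where "g x0 = ereal r0" by (rule finite_value)
  with min[of x0] obtain rz where rz: "g z = ereal rz" by (cases "g z") auto
  \<comment> \<open>The quadratic part of the objective is o(norm (w - z)), so u - z is a Frechet subgradient.\<close>
  have local: "g z + ereal ((u - z) \<bullet> (w - z) - \<epsilon> * norm (w - z)) \<le> g w"
    if "w \<in> ball z (2 * \<epsilon>)" for \<epsilon> w
  proof (cases "g w")
    case (real rw)
    have "norm (w - z) < 2 * \<epsilon>" using that by (simp add: dist_norm norm_minus_commute)
    then have "norm (w - z) * norm (w - z) \<le> (2 * \<epsilon>) * norm (w - z)"
      by (intro mult_right_mono) auto
    then have "1/2 * (norm (w - z))\<^sup>2 \<le> \<epsilon> * norm (w - z)"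
      by (simp add: power2_eq_square)
    moreover have "1/2 * (norm (z - u))\<^sup>2 + rz \<le> 1/2 * (norm (w - u))\<^sup>2 + rw"
      using min[of w] rz real by simp
    moreover have "(u - z) \<bullet> (w - z) = - ((z - u) \<bullet> (w - z))" by (simp add: inner_diff_left)
    ultimately have "rz + ((u - z) \<bullet> (w - z) - \<epsilon> * norm (w - z)) \<le> rw"
      using norm_diff_sq_expand[of w u z] by linarith
    then show ?thesis using rz real by simp
  qed auto
  have "\<exists>\<delta>>0. \<forall>w\<in>ball z \<delta>. g z + ereal ((u - z) \<bullet> (w - z) - \<epsilon> * norm (w - z)) \<le> g w"
    if "\<epsilon> > 0" for \<epsilon>
    using local that by (intro exI[of _ "2 * \<epsilon>"]) auto
  then have "u - z \<in> regular_subdiff g z" unfolding regular_subdiff_def using rz by simp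
  then show ?thesis by (simp add: regular_subdiff_eq_convex_subdiff)
qed

lemma subdiff_imp_prox_min:
  assumes "u - z \<in> convex_subdiff g z"
  shows "ereal (1/2 * (norm (z - u))\<^sup>2) + g z \<le> ereal (1/2 * (norm (w - u))\<^sup>2) + g w"
proof (cases "g w")
  case (real rw)
  obtain rz where rz: "g z = ereal rz" using assms by (rule convex_subdiff_finite)
  have "g z + ereal ((u - z) \<bullet> (w - z)) \<le> g w" using assms unfolding convex_subdiff_def by blast
  then have "rz + (u - z) \<bullet> (w - z) \<le> rw" using rz real by simp
  moreover have "(u - z) \<bullet> (w - z) = - ((z - u) \<bullet> (w - z))" by (simp add: inner_diff_left)
  ultimately have "1/2 * (norm (z - u))\<^sup>2 + rz \<le> 1/2 * (norm (w - u))\<^sup>2 + rw"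
    using norm_diff_sq_expand[of w u z] zero_le_power2[of "norm (w - z)"] by linarith
  then show ?thesis using rz real by simp
qed auto

lemma prox_eq_iff_subdiff: "prox g u = z \<longleftrightarrow> u - z \<in> convex_subdiff g z"
proof -
  let ?P = "\<lambda>z. \<forall>w. ereal (1/2 * (norm (z - u))\<^sup>2) + g z \<le> ereal (1/2 * (norm (w - u))\<^sup>2) + g w"
  have unique: "z1 = z2" if "?P z1" "?P z2" for z1 z2
  proof -
    have "0 \<le> ((u - z1) - (u - z2)) \<bullet> (z1 - z2)"
      using that by (intro convex_subdiff_monotone prox_min_imp_subdiff) auto
    then have "(z1 - z2) \<bullet> (z1 - z2) \<le> 0"
      by (simp add: inner_diff_left inner_diff_right inner_commute)
    then have "(z1 - z2) \<bullet> (z1 - z2) = 0" using inner_ge_zero[of "z1 - z2"] by linarith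
    then show ?thesis by simp
  qed
  obtain z0 where z0: "?P z0" by (rule prox_objective_has_min) blast
  have "prox g u = z0" unfolding prox_def using z0 unique by (intro the_equality) auto
  then show ?thesis using z0 unique prox_min_imp_subdiff subdiff_imp_prox_min by blast
qed

lemma prox_in_subdiff: "u - prox g u \<in> convex_subdiff g (prox g u)"
  using prox_eq_iff_subdiff by blast

lemma prox_nonexpansive: "norm (prox g u - prox g u') \<le> norm (u - u')"
proof -
  let ?p = "prox g u" and ?p' = "prox g u'"
  have "0 \<le> ((u - ?p) - (u' - ?p')) \<bullet> (?p - ?p')"
    by (rule convex_subdiff_monotone[OF prox_in_subdiff prox_in_subdiff])
  then have "(norm (?p - ?p'))\<^sup>2 \<le> (u - u') \<bullet> (?p - ?p')"
    by (simp add: power2_norm_eq_inner inner_diff_left inner_diff_right inner_commute)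
  also have "\<dots> \<le> norm (u - u') * norm (?p - ?p')" by (rule norm_cauchy_schwarz)
  finally have "norm (?p - ?p') * norm (?p - ?p') \<le> norm (u - u') * norm (?p - ?p')"
    by (simp add: power2_eq_square)
  then show ?thesis by (cases "norm (?p - ?p') = 0") (auto simp: mult_le_cancel_right)
qed

lemma isCont_prox: "isCont (prox g) u"
proof -
  have "1-lipschitz_on UNIV (prox g)"
    using prox_nonexpansive by (intro lipschitz_onI) (auto simp: dist_norm)
  then show ?thesis
    using lipschitz_on_continuous_on continuous_on_eq_continuous_at open_UNIV by blast
qed

end

section \<open>Local Lipschitz continuity of the gradient\<close>

lemma derivative_locally_lipschitz:
  fixes D :: "'a::euclidean_space \<Rightarrow> 'b::real_normed_vector"
  assumes U: "open U" "a \<in> U"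
    and D2: "\<And>y. y \<in> U \<Longrightarrow> (D has_derivative blinfun_apply (D2 y)) (at y)"
    and cont: "continuous_on U D2"
  obtains r B where "r > 0" "cball a r \<subseteq> U" "B-lipschitz_on (cball a r) D"
proof -
  obtain r where r: "r > 0" "cball a r \<subseteq> U" using U open_contains_cball by blast
  have "compact (D2 ` cball a r)"
    by (rule compact_continuous_image[OF continuous_on_subset[OF cont r(2)] compact_cball])
  then have "bounded (D2 ` cball a r)" by (rule compact_imp_bounded)
  then obtain B where B: "B > 0" "\<And>y. y \<in> cball a r \<Longrightarrow> norm (D2 y) \<le> B"
    unfolding bounded_pos by auto
  have "B-lipschitz_on (cball a r) D"
  proof (rule lipschitz_onI)
    fix x y assume "x \<in> cball a r" "y \<in> cball a r"
    moreover have "(D has_derivative blinfun_apply (D2 z)) (at z within cball a r)"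
      if "z \<in> cball a r" for z using D2 r(2) that by (blast intro: has_derivative_at_withinI)
    moreover have "onorm (blinfun_apply (D2 z)) \<le> B" if "z \<in> cball a r" for z
      using B(2)[OF that] by (simp add: norm_blinfun.rep_eq)
    ultimately show "dist (D x) (D y) \<le> B * dist x y"
      unfolding dist_norm by (intro differentiable_bound[OF convex_cball]) auto
  qed (use B in simp)
  with r show thesis by (rule that)
qed

lemma gradient_of_affine_composition:
  fixes T :: "'a::real_inner \<Rightarrow> 'b::real_normed_vector" and Dy :: "'b \<Rightarrow>\<^sub>L real"
  assumes T: "bounded_linear T"
    and D: "(h has_derivative blinfun_apply Dy) (at (T x - b))"
    and grad: "((\<lambda>z. h (T z - b)) has_derivative (\<lambda>v. gx \<bullet> v)) (at x)"
  shows "gx \<bullet> v = Dy (T v)"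
proof -
  have "((\<lambda>z. T z - b) has_derivative T) (at x)"
    using has_derivative_diff[OF bounded_linear_imp_has_derivative[OF T] has_derivative_const] by simp
  then have "((\<lambda>z. h (T z - b)) has_derivative (\<lambda>v. Dy (T v))) (at x)"
    using diff_chain_at[where f = "\<lambda>z. T z - b", OF _ D] by (simp add: o_def)
  from has_derivative_unique[OF grad this] show ?thesis by meson
qed

lemma gradient_of_C2_composition_locally_lipschitz:
  fixes T :: "'a::euclidean_space \<Rightarrow> 'b::euclidean_space" and psi :: "'b \<Rightarrow> ereal"
  assumes T: "bounded_linear T" and Omega: "open Omega" "xb \<in> Omega"
    and U: "open U" "(\<lambda>x. T x - b) ` Omega \<subseteq> U" "C2_on psi U"
    and grad: "\<And>x. x \<in> Omega \<Longrightarrow>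
      ((\<lambda>z. real_of_ereal (psi (T z - b))) has_derivative (\<lambda>h. gf x \<bullet> h)) (at x)"
  obtains \<rho> L where "\<rho> > 0" "ball xb \<rho> \<subseteq> Omega" "L-lipschitz_on (ball xb \<rho>) gf"
proof -
  obtain D :: "'b \<Rightarrow> ('b \<Rightarrow>\<^sub>L real)" and D2 :: "'b \<Rightarrow> ('b \<Rightarrow>\<^sub>L ('b \<Rightarrow>\<^sub>L real))"
    where D: "\<And>y. y \<in> U \<Longrightarrow> ((\<lambda>z. real_of_ereal (psi z)) has_derivative blinfun_apply (D y)) (at y)"
      and D2: "\<And>y. y \<in> U \<Longrightarrow> (D has_derivative blinfun_apply (D2 y)) (at y)"
      and D2_cont: "continuous_on U D2"
    using U(3) unfolding C2_on_def by blast
  have "T xb - b \<in> U" using U(2) Omega(2) by blast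
  then obtain r B where r: "r > 0" "cball (T xb - b) r \<subseteq> U"
    and D_lip: "B-lipschitz_on (cball (T xb - b) r) D"
    using derivative_locally_lipschitz[OF U(1) _ D2 D2_cont] by blast
  obtain K where K: "K > 0" "\<And>h. norm (T h) \<le> norm h * K"
    using bounded_linear.pos_bounded[OF T] by blast
  obtain \<rho>1 where \<rho>1: "\<rho>1 > 0" "ball xb \<rho>1 \<subseteq> Omega" using Omega open_contains_ball by blast
  define \<rho> where "\<rho> = min \<rho>1 (r / K)"
  have \<rho>: "\<rho> > 0" "ball xb \<rho> \<subseteq> Omega" using \<rho>1 r K by (auto simp: \<rho>_def)
  have image: "T x - b \<in> cball (T xb - b) r" if "x \<in> ball xb \<rho>" for x
  proof -
    have "norm (T x - T xb) \<le> norm (x - xb) * K"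
      using K(2) linear_diff[OF bounded_linear.linear[OF T]] by metis
    also have "\<dots> \<le> r / K * K"
      using that K by (intro mult_right_mono) (auto simp: \<rho>_def dist_norm norm_minus_commute)
    finally show ?thesis using K by (simp add: dist_norm norm_minus_commute)
  qed
  have chain: "gf x \<bullet> h = D (T x - b) (T h)" if "x \<in> Omega" for x h
    using gradient_of_affine_composition[OF T D grad[OF that]] U(2) that by blast
  have "(B * K * K)-lipschitz_on (ball xb \<rho>) gf"
  proof (rule lipschitz_onI)
    fix x y assume x: "x \<in> ball xb \<rho>" and y: "y \<in> ball xb \<rho>"
    define d where "d = gf x - gf y"
    have "(norm d)\<^sup>2 = gf x \<bullet> d - gf y \<bullet> d"
      by (simp add: d_def power2_norm_eq_inner inner_diff_left)
    also have "\<dots> = (D (T x - b) - D (T y - b)) (T d)"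
      using chain[of x d] chain[of y d] x y \<rho>(2) by (simp add: subset_iff blinfun.diff_left)
    also have "\<dots> \<le> norm (D (T x - b) - D (T y - b)) * norm (T d)"
      using norm_blinfun[of "D (T x - b) - D (T y - b)" "T d"] by simp
    also have "\<dots> \<le> (B * norm (T x - T y)) * (norm d * K)"
      using lipschitz_onD[OF D_lip image[OF x] image[OF y]] K(2)[of d]
      by (intro mult_mono) (auto simp: dist_norm lipschitz_on_nonneg[OF D_lip])
    also have "\<dots> \<le> (B * (norm (x - y) * K)) * (norm d * K)"
      using K(2)[of "x - y"] lipschitz_on_nonneg[OF D_lip] K(1)
      by (intro mult_right_mono mult_left_mono) (auto simp: linear_diff[OF bounded_linear.linear[OF T]])
    finally have "norm d * norm d \<le> (B * K * K * norm (x - y)) * norm d"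
      by (simp add: power2_eq_square algebra_simps)
    then show "dist (gf x) (gf y) \<le> B * K * K * dist x y"
      unfolding dist_norm d_def[symmetric] using K(1) lipschitz_on_nonneg[OF D_lip]
      by (cases "norm d = 0") (auto simp: mult_le_cancel_right)
  qed (use K lipschitz_on_nonneg[OF D_lip] in simp)
  with \<rho> show thesis by (rule that)
qed

section \<open>Smooth plus convex: the residual\<close>

locale smooth_plus_convex = proper_lsc_convex g for g :: "'a::euclidean_space \<Rightarrow> ereal" +
  fixes f :: "'a \<Rightarrow> ereal" and gf :: "'a \<Rightarrow> 'a" and S :: "'a set"
  assumes open_S: "open S" and dom_subset: "edom g \<subseteq> S"
    and f_finite: "\<And>x. x \<in> S \<Longrightarrow> \<bar>f x\<bar> \<noteq> \<infinity>"
    and f_gradient: "\<And>x. x \<in> S \<Longrightarrow> ((\<lambda>z. real_of_ereal (f z)) has_derivative (\<lambda>h. gf x \<bullet> h)) (at x)"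
begin

definition residual :: "'a \<Rightarrow> 'a" where
  "residual x = x - prox g (x - gf x)"

lemma convex_subdiff_in_S: "v \<in> convex_subdiff g x \<Longrightarrow> x \<in> S"
  using dom_subset unfolding convex_subdiff_def edom_def by blast

lemma regular_subdiff_sum_iff:
  "x \<in> S \<Longrightarrow> v \<in> regular_subdiff (\<lambda>x. f x + g x) x \<longleftrightarrow> v - gf x \<in> convex_subdiff g x"
  using regular_subdiff_add_differentiable[OF open_S _ f_finite f_gradient]
  by (simp add: regular_subdiff_eq_convex_subdiff)

lemma limiting_subdiff_imp_convex_subdiff:
  assumes x: "x \<in> S" and cont: "isCont gf x" and w: "w \<in> limiting_subdiff (\<lambda>x. f x + g x) x"
  shows "w - gf x \<in> convex_subdiff g x"
proof -
  obtain xs vs where xs: "xs \<longlonglongrightarrow> x" and vs: "vs \<longlonglongrightarrow> w"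
    and reg: "\<And>k. vs k \<in> regular_subdiff (\<lambda>x. f x + g x) (xs k)"
    using w unfolding limiting_subdiff_def by blast
  have "\<forall>\<^sub>F k in sequentially. xs k \<in> S" using xs open_S x by (rule topological_tendstoD)
  then have "\<forall>\<^sub>F k in sequentially. vs k - gf (xs k) \<in> convex_subdiff g (xs k)"
    by eventually_elim (use reg regular_subdiff_sum_iff in blast)
  moreover have "(\<lambda>k. vs k - gf (xs k)) \<longlonglongrightarrow> w - gf x"
    by (intro tendsto_intros vs isCont_tendsto_compose[OF cont xs])
  ultimately show ?thesis by (intro convex_subdiff_closed_graph[OF xs])
qed

lemma prox_forward_step_limiting:
  assumes "x \<in> S" "isCont gf x" "w \<in> limiting_subdiff (\<lambda>x. f x + g x) x"
  shows "prox g (x - gf x + w) = x"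
  using limiting_subdiff_imp_convex_subdiff[OF assms] by (simp add: prox_eq_iff_subdiff)

lemma norm_residual_le_limiting_subdiff:
  assumes "x \<in> S" "isCont gf x" "w \<in> limiting_subdiff (\<lambda>x. f x + g x) x"
  shows "norm (residual x) \<le> norm w"
proof -
  have "residual x = prox g (x - gf x + w) - prox g (x - gf x)"
    using prox_forward_step_limiting[OF assms] by (simp add: residual_def)
  also have "norm \<dots> \<le> norm ((x - gf x + w) - (x - gf x))" by (rule prox_nonexpansive)
  finally show ?thesis by simp
qed

lemma critical_imp_residual_eq_0:
  "x \<in> S \<Longrightarrow> isCont gf x \<Longrightarrow> 0 \<in> limiting_subdiff (\<lambda>x. f x + g x) x \<Longrightarrow> residual x = 0"
  using prox_forward_step_limiting[of x 0] by (simp add: residual_def)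

lemma limiting_subdiff_at_prox:
  "gf (x - residual x) - gf x + residual x \<in> limiting_subdiff (\<lambda>x. f x + g x) (x - residual x)"
proof -
  let ?y = "prox g (x - gf x)"
  have sub: "(x - gf x) - ?y \<in> convex_subdiff g ?y" by (rule prox_in_subdiff)
  then have "gf ?y + ((x - gf x) - ?y) \<in> regular_subdiff (\<lambda>x. f x + g x) ?y"
    using regular_subdiff_sum_iff[OF convex_subdiff_in_S[OF sub]] by simp
  moreover have "gf ?y + ((x - gf x) - ?y) = gf ?y - gf x + residual x"
    by (simp add: residual_def algebra_simps)
  moreover have "x - residual x = ?y" by (simp add: residual_def)
  ultimately show ?thesis using regular_subdiff_imp_limiting by simp
qed

lemma residual_eq_0_imp_critical:
  "residual x = 0 \<Longrightarrow> 0 \<in> limiting_subdiff (\<lambda>x. f x + g x) x"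
  using limiting_subdiff_at_prox[of x] by simp

lemma isCont_residual: "isCont gf x \<Longrightarrow> isCont residual x"
  unfolding residual_def[abs_def]
  by (intro continuous_intros continuous_at_compose[OF _ isCont_prox, unfolded o_def])

lemma eventually_near_small_subgradient:
  assumes lip: "L-lipschitz_on (ball xb \<rho>) gf" and "0 < \<rho>" and "residual xb = 0"
  shows "\<forall>\<^sub>F x in nhds xb. \<exists>y. dist x y \<le> norm (residual x) \<and>
           (\<exists>w\<in>limiting_subdiff (\<lambda>x. f x + g x) y. norm w \<le> (1 + L) * norm (residual x))"
proof -
  have "isCont gf xb"
    using lipschitz_on_continuous_on[OF lip] \<open>0 < \<rho>\<close>
      continuous_on_eq_continuous_at[OF open_ball, of xb \<rho> gf] by simp
  then have "isCont residual xb" by (rule isCont_residual)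
  then have "(residual \<longlongrightarrow> 0) (nhds xb)"
    using tendsto_at_iff_tendsto_nhds[of residual xb] \<open>residual xb = 0\<close> by (simp add: isCont_def)
  then have "((\<lambda>x. norm (residual x)) \<longlongrightarrow> 0) (nhds xb)" by (rule tendsto_norm_zero)
  from order_tendstoD(2)[OF this, of "\<rho> / 2"]
  have "\<forall>\<^sub>F x in nhds xb. norm (residual x) < \<rho> / 2" using \<open>0 < \<rho>\<close> by simp
  moreover have "\<forall>\<^sub>F x in nhds xb. x \<in> ball xb (\<rho> / 2)"
    using \<open>0 < \<rho>\<close> by (intro eventually_nhds_ball) simp
  ultimately show ?thesis
  proof eventually_elim
    case (elim x)
    define y where "y = x - residual x"
    have "dist y xb \<le> dist x xb + norm (residual x)"
      using norm_triangle_ineq4[of "x - xb" "residual x"] by (simp add: y_def dist_norm algebra_simps)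
    moreover have "dist x xb < \<rho> / 2" "norm (residual x) < \<rho> / 2"
      using elim by (auto simp: dist_commute)
    ultimately have "x \<in> ball xb \<rho>" "y \<in> ball xb \<rho>"
      using zero_le_dist[of x xb] unfolding mem_ball dist_commute[of xb] by linarith+
    then have "norm (gf y - gf x) \<le> L * norm (residual x)"
      using lipschitz_onD[OF lip, of y x] by (simp add: dist_norm y_def)
    then have "norm (gf y - gf x + residual x) \<le> (1 + L) * norm (residual x)"
      using norm_triangle_ineq[of "gf y - gf x" "residual x"] by (simp add: algebra_simps)
    moreover have "dist x y \<le> norm (residual x)" by (simp add: y_def dist_norm)
    ultimately show ?case using limiting_subdiff_at_prox[of x] unfolding y_def[symmetric] by blast
  qed
qed

lemma subregularity_transfer:
  assumes lip: "L-lipschitz_on (ball xb \<rho>) gf" and "0 < \<rho>" "ball xb \<rho> \<subseteq> S"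
    and crit: "0 \<in> limiting_subdiff (\<lambda>x. f x + g x) xb" and q: "q > 0"
  shows "(q_subregular (limiting_subdiff (\<lambda>x. f x + g x)) xb 0 q
            \<longrightarrow> q_subregular (\<lambda>x. {residual x}) xb 0 (min q 1))
       \<and> (q_subregular (\<lambda>x. {residual x}) xb 0 q
            \<longrightarrow> q_subregular (limiting_subdiff (\<lambda>x. f x + g x)) xb 0 q)"
proof -
  have cont: "isCont gf x" if "x \<in> ball xb \<rho>" for x
    using lipschitz_on_continuous_on[OF lip] that continuous_on_eq_continuous_at[OF open_ball] by blast
  have near_xb: "\<forall>\<^sub>F x in nhds xb. x \<in> S \<and> isCont gf x"
    using eventually_nhds_ball[OF \<open>0 < \<rho>\<close>] by eventually_elim (use cont assms(3) in blast)
  have "xb \<in> S" using assms(2,3) by auto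
  then have res_xb: "residual xb = 0"
    using critical_imp_residual_eq_0[OF _ cont crit] \<open>0 < \<rho>\<close> by simp
  have "\<forall>\<^sub>F z in nhds xb. 0 \<in> limiting_subdiff (\<lambda>x. f x + g x) z \<longrightarrow> residual z = 0"
    using near_xb by eventually_elim (use critical_imp_residual_eq_0 in blast)
  moreover have "\<forall>\<^sub>F x in nhds xb. \<forall>w\<in>limiting_subdiff (\<lambda>x. f x + g x) x. norm (residual x) \<le> norm w"
    using near_xb by eventually_elim (use norm_residual_le_limiting_subdiff in blast)
  ultimately show ?thesis
    using q_subregular_residual_from_subregular[OF _ q _ isCont_residual[OF cont] res_xb _
        eventually_near_small_subgradient[OF lip \<open>0 < \<rho>\<close> res_xb]]
      q_subregular_from_residual[where r = residual and M = "limiting_subdiff (\<lambda>x. f x + g x)",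
        OF _ q crit residual_eq_0_imp_critical]
      lipschitz_on_nonneg[OF lip] \<open>0 < \<rho>\<close> by simp
qed

end

theorem lemma2p3:
  fixes A :: "real^'n^'m" and b :: "real^'m"
    and psi :: "real^'m \<Rightarrow> ereal" and g :: "real^'n \<Rightarrow> ereal"
    and grad_f :: "real^'n \<Rightarrow> real^'n"
    and Omega :: "(real^'n) set"
    and xb :: "real^'n" and q :: real
  defines "f \<equiv> (\<lambda>x. psi (A *v x - b))"
  defines "F \<equiv> (\<lambda>x. f x + g x)"
  defines "R \<equiv> (\<lambda>x. x - prox g (x - grad_f x))"
  assumes psi_proper: "proper_fun psi" and psi_lsc: "lsc_fun psi"
    and g_proper: "proper_fun g" and g_lsc: "lsc_fun g"
    and O_open: "open Omega" and O_dom: "edom g \<subseteq> Omega"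
    and psi_C2: "\<exists>U. open U \<and> (\<lambda>x. A *v x - b) ` Omega \<subseteq> U \<and> C2_on psi U"
    and grad_f: "\<forall>x\<in>Omega. ((\<lambda>z. real_of_ereal (f z)) has_derivative (\<lambda>h. grad_f x \<bullet> h)) (at x)"
    and g_convex: "convex_efun g" and g_cont: "continuous_on (edom g) g"
    and F_bdd_below: "\<exists>c::real. \<forall>x. ereal c \<le> F x"
    and F_level_bdd: "\<forall>\<alpha>::real. bounded {x. F x \<le> ereal \<alpha>}"
    and xb_crit: "xb \<in> edom g" "0 \<in> limiting_subdiff F xb"
    and q_pos: "q > 0"
  shows "(q_subregular (limiting_subdiff F) xb 0 q \<longrightarrow> q_subregular (\<lambda>x. {R x}) xb 0 (min q 1))
       \<and> (q_subregular (\<lambda>x. {R x}) xb 0 q \<longrightarrow> q_subregular (limiting_subdiff F) xb 0 q)"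
proof -
  interpret proper_lsc_convex g using g_proper g_lsc g_convex by unfold_locales
  obtain U where U: "open U" "(\<lambda>x. A *v x - b) ` Omega \<subseteq> U" "C2_on psi U" using psi_C2 by blast
  have "\<forall>y\<in>U. \<bar>psi y\<bar> \<noteq> \<infinity>" using U(3) unfolding C2_on_def by (rule conjunct1)
  then have "\<bar>f x\<bar> \<noteq> \<infinity>" if "x \<in> Omega" for x
    using subsetD[OF U(2) imageI[OF that]] by (simp add: f_def)
  then interpret smooth_plus_convex g f grad_f Omega using O_open O_dom grad_f by unfold_locales auto
  have xb: "xb \<in> Omega" using xb_crit(1) O_dom by blast
  obtain \<rho> L where "\<rho> > 0" "ball xb \<rho> \<subseteq> Omega" "L-lipschitz_on (ball xb \<rho>) grad_f"
    using gradient_of_C2_composition_locally_lipschitz[OF matrix_vector_mul_bounded_linear O_open xb U]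
      grad_f unfolding f_def by blast
  moreover have "R = residual" by (simp add: R_def residual_def fun_eq_iff)
  ultimately show ?thesis
    using subregularity_transfer[OF _ _ _ xb_crit(2)[unfolded F_def] q_pos] unfolding F_def by simp
qed

end
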